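(* Let $\mathbf{T}\subset\mathbb{S}^3$ be a $\mathbb{Z}_2$-symmetric spherical tetrahedron with dihedral angles $A$, $B=E$, $C=F$, $D$ and edge lengths $l_A$, $l_B=l_E$, $l_C=l_F$, $l_D$, edge matrix $G^\star$ and Gram matrix $G$. Put $\Delta=\det G$, $\Delta^\star=\det G^\star$, and $$u=\sqrt{\frac{c^\star_{00}c^\star_{22}}{\Delta^\star}},\qquad v=\sqrt{\frac{c_{00}c_{22}}{\Delta}}.$$ Then $$u=\frac{\sin\frac{l_A+l_D}{2}}{\sin\frac{A+D}{2}}=\frac{\sin\frac{l_A-l_D}{2}}{\sin\frac{D-A}{2}}=\frac{\sin l_B}{\sin B}=\frac{\sin l_C}{\sin C}=v^{-1}.$$
   Context: A spherical tetrahedron $\mathbf{T}\subset\mathbb{S}^3\subset\mathbb{R}^4$ is the intersection of $\mathbb{S}^3$ with the cone over four linearly independent unit vectors $\mathrm{p}_0,\dots,\mathrm{p}_3$ (its vertices). Edge lengths $l_{ij}\in[0,\pi]$: $\cos l_{ij}=\langle \mathrm{p}_i,\mathrm{p}_j\rangle$; with $\mathrm{v}_i$ the outer unit normal to the face opposite $\mathrm{p}_i$, dihedral angles $\alpha_{ij}\in[0,\pi]$: $\cos\alpha_{ij}=-\langle\mathrm{v}_i,\mathrm{v}_j\rangle$. Notation: $l_A=l_{01}$, $l_B=l_{02}$, $l_C=l_{03}$, $l_D=l_{23}$, $l_E=l_{13}$, $l_F=l_{12}$, and $A,\dots,F$ are the dihedral angles along the edges of lengths $l_A,\dots,l_F$.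 The edge matrix is $G^\star=\begin{pmatrix}1&\cos l_A&\cos l_B&\cos l_C\\ \cos l_A&1&\cos l_F&\cos l_E\\ \cos l_B&\cos l_F&1&\cos l_D\\ \cos l_C&\cos l_E&\cos l_D&1\end{pmatrix}$ and the Gram matrix is $G=\begin{pmatrix}1&-\cos D&-\cos E&-\cos F\\ -\cos D&1&-\cos C&-\cos B\\ -\cos E&-\cos C&1&-\cos A\\ -\cos F&-\cos B&-\cos A&1\end{pmatrix}$ (rows/columns indexed $0,\dots,3$). $c_{ij}$ and $c^\star_{ij}$ denote the $(i,j)$-cofactors $(-1)^{i+j}\det(\text{minor})$ of $G$ and $G^\star$. $\mathbf{T}$ is $\mathbb{Z}_2$-symmetric if it is invariant under the rotation through $\pi$ about the axis through the midpoints of the edges $\mathrm{p}_0\mathrm{p}_1$ and $\mathrm{p}_2\mathrm{p}_3$; then $l_B=l_E$, $l_C=l_F$, $B=E$, $C=F$. The number $u$ is called the principal parameter and $v$ the dual parameter of $\mathbf{T}$. *)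

theory Defs
  imports "HOL-Analysis.Analysis"
begin

definition sph_tetra_vertices :: "(4 \<Rightarrow> real^4) \<Rightarrow> bool" where
  "sph_tetra_vertices p \<longleftrightarrow> (\<forall>i. norm (p i) = 1) \<and> inj p \<and> independent (range p)"

definition sph_tetra :: "(4 \<Rightarrow> real^4) \<Rightarrow> (real^4) set" where
  "sph_tetra p = {x. norm x = 1 \<and> (\<exists>c. (\<forall>i. c i \<ge> 0) \<and> x = (\<Sum>i\<in>UNIV. c i *\<^sub>R p i))}"

definition edge_len :: "(4 \<Rightarrow> real^4) \<Rightarrow> 4 \<Rightarrow> 4 \<Rightarrow> real" where
  "edge_len p i j = arccos (p i \<bullet> p j)"

definition outer_normal :: "(4 \<Rightarrow> real^4) \<Rightarrow> 4 \<Rightarrow> real^4" where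
  "outer_normal p i = (THE v. norm v = 1 \<and> (\<forall>j. j \<noteq> i \<longrightarrow> v \<bullet> p j = 0) \<and> v \<bullet> p i < 0)"

definition dihedral :: "(4 \<Rightarrow> real^4) \<Rightarrow> 4 \<Rightarrow> 4 \<Rightarrow> real" where
  "dihedral p i j = arccos (- (outer_normal p i \<bullet> outer_normal p j))"

definition edge_matrix :: "(4 \<Rightarrow> real^4) \<Rightarrow> real^4^4" where
  "edge_matrix p = (\<chi> i j. if i = j then 1 else cos (edge_len p i j))"

definition gram_matrix :: "(4 \<Rightarrow> real^4) \<Rightarrow> real^4^4" where
  "gram_matrix p = (\<chi> i j. if i = j then 1 else - cos (dihedral p i j))"

text \<open>Cofactors of a 4x4 matrix, rows/columns indexed by naturals 0..3.\<close>
definition skip_idx :: "nat \<Rightarrow> 3 \<Rightarrow> nat" where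
  "skip_idx i k = (let n = (if k = 0 then 0 else if k = 1 then 1 else (2::nat)) in
                   if n < i then n else n + 1)"

definition minor4 :: "real^4^4 \<Rightarrow> nat \<Rightarrow> nat \<Rightarrow> real^3^3" where
  "minor4 M i j = (\<chi> k l. M $ of_nat (skip_idx i k) $ of_nat (skip_idx j l))"

definition cofactor4 :: "real^4^4 \<Rightarrow> nat \<Rightarrow> nat \<Rightarrow> real" where
  "cofactor4 M i j = (-1) ^ (i + j) * det (minor4 M i j)"

text \<open>Rotation through pi about the great circle through the midpoints of p0p1 and p2p3:
  the linear map fixing span{p0+p1, p2+p3} pointwise and acting as -id on its orthogonal complement.\<close>
definition z2_rotation :: "(4 \<Rightarrow> real^4) \<Rightarrow> real^4 \<Rightarrow> real^4" where
  "z2_rotation p = (THE f. linear f \<and>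
      (\<forall>x\<in>span {p 0 + p 1, p 2 + p 3}. f x = x) \<and>
      (\<forall>x. orthogonal x (p 0 + p 1) \<and> orthogonal x (p 2 + p 3) \<longrightarrow> f x = - x))"

definition z2_symmetric :: "(4 \<Rightarrow> real^4) \<Rightarrow> bool" where
  "z2_symmetric p \<longleftrightarrow> z2_rotation p ` sph_tetra p = sph_tetra p"

end

theory Submission
  imports Defs
begin

text \<open>The rotation of a \<open>\<int>\<^sub>2\<close>-symmetric tetrahedron is a linear isometry that maps the
  tetrahedron onto itself and fixes \<open>p\<^sub>0 + p\<^sub>1\<close> and \<open>p\<^sub>2 + p\<^sub>3\<close>, so it swaps \<open>p\<^sub>0, p\<^sub>1\<close>
  and \<open>p\<^sub>2, p\<^sub>3\<close>. Hence the edge matrix \<open>G\<^sup>\<star>\<close> has the pattern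
  \<open>[[1,a,b,c],[a,1,c,b],[b,c,1,d],[c,b,d,1]]\<close>, and so has its adjugate \<open>(c\<^sup>\<star>\<^sub>i\<^sub>j)\<close>.
  Since \<open>adj G\<^sup>\<star> \<cdot> G\<^sup>\<star> = \<Delta>\<^sup>\<star> I\<close>, the vectors \<open>w\<^sub>i = - \<Sum>\<^sub>k c\<^sup>\<star>\<^sub>i\<^sub>k p\<^sub>k\<close> satisfy
  \<open>w\<^sub>i \<bullet> p\<^sub>j = - \<Delta>\<^sup>\<star> \<delta>\<^sub>i\<^sub>j\<close>: they are outer normals with \<open>w\<^sub>i \<bullet> w\<^sub>j = \<Delta>\<^sup>\<star> c\<^sup>\<star>\<^sub>i\<^sub>j\<close>, so the
  Gram matrix is the adjugate normalised by its diagonal and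
  \<open>cos \<alpha>\<^sub>i\<^sub>j = - c\<^sup>\<star>\<^sub>i\<^sub>j / sqrt (c\<^sup>\<star>\<^sub>i\<^sub>i c\<^sup>\<star>\<^sub>j\<^sub>j)\<close>. Jacobi's identities
  \<open>c\<^sup>\<star>\<^sub>i\<^sub>i c\<^sup>\<star>\<^sub>j\<^sub>j - c\<^sup>\<star>\<^sub>i\<^sub>j\<^sup>2 = \<Delta>\<^sup>\<star> sin\<^sup>2 l\<close>, with \<open>l\<close> the length of the edge of \<open>\<alpha>\<^sub>i\<^sub>j\<close>,
  turn this into \<open>sin \<alpha>\<^sub>i\<^sub>j = sin l / u\<close> for \<open>B\<close> and \<open>C\<close>, and together with the addition and
  half-angle formulas into the two half-angle expressions for \<open>u\<close>. Finally \<open>det G\<close> and its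
  cofactors are those of the rescaled adjugate, which gives \<open>v = 1/u\<close>.\<close>

section \<open>Determinants of 4 by 4 matrices\<close>

lemma UNIV_4_eq: "(UNIV::4 set) = {0, 1, 2, 3}"
proof -
  have four: "(4::4) = 0" by simp
  show ?thesis using exhaust_4 by (auto simp: four)
qed

lemma UNIV_3_eq: "(UNIV::3 set) = {0, 1, 2}"
proof -
  have three: "(3::3) = 0" by simp
  show ?thesis using exhaust_3 by (auto simp: three)
qed

lemma all_4: "(\<forall>i::4. P i) \<longleftrightarrow> P 0 \<and> P 1 \<and> P 2 \<and> P 3"
  using UNIV_4_eq by (metis UNIV_I empty_iff insert_iff)

lemma sum_UNIV_4: "(\<Sum>i\<in>(UNIV::4 set). f i) = f 0 + f 1 + f 2 + f 3"
  unfolding UNIV_4_eq by (simp add: ac_simps)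

lemma det_4:
  "det (A::'a::comm_ring_1^4^4) =
     A$1$1*A$2$2*A$3$3*A$0$0 - A$1$1*A$2$2*A$3$0*A$0$3 - A$1$1*A$2$3*A$3$2*A$0$0 + A$1$1*A$2$3*A$3$0*A$0$2
     + A$1$1*A$2$0*A$3$2*A$0$3 - A$1$1*A$2$0*A$3$3*A$0$2 - A$1$2*A$2$1*A$3$3*A$0$0 + A$1$2*A$2$1*A$3$0*A$0$3
     + A$1$2*A$2$3*A$3$1*A$0$0 - A$1$2*A$2$3*A$3$0*A$0$1 - A$1$2*A$2$0*A$3$1*A$0$3 + A$1$2*A$2$0*A$3$3*A$0$1
     + A$1$3*A$2$1*A$3$2*A$0$0 - A$1$3*A$2$1*A$3$0*A$0$2 - A$1$3*A$2$2*A$3$1*A$0$0 + A$1$3*A$2$2*A$3$0*A$0$1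
     + A$1$3*A$2$0*A$3$1*A$0$2 - A$1$3*A$2$0*A$3$2*A$0$1 - A$1$0*A$2$1*A$3$2*A$0$3 + A$1$0*A$2$1*A$3$3*A$0$2
     + A$1$0*A$2$2*A$3$1*A$0$3 - A$1$0*A$2$2*A$3$3*A$0$1 - A$1$0*A$2$3*A$3$1*A$0$2 + A$1$0*A$2$3*A$3$2*A$0$1"
proof -
  have f1: "finite {1::4, 2, 3}" "0 \<notin> {1::4, 2, 3}" by auto
  have f2: "finite {2::4, 3}" "1 \<notin> {2::4, 3}" by auto
  have f3: "finite {3::4}" "2 \<notin> {3::4}" by auto
  show ?thesis
    unfolding det_def UNIV_4_eq
    unfolding sum_over_permutations_insert [OF f1] sum_over_permutations_insert [OF f2]
      sum_over_permutations_insert [OF f3] permutes_sing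
    by (simp add: sign_swap_id permutation_swap_id sign_compose permutation_compose
        swap_id_eq algebra_simps)
qed

lemma det_scale_rows_cols:
  fixes M :: "'a::comm_ring_1^'n^'n"
  shows "det (\<chi> i j. x i * M$i$j * y j) = prod x UNIV * prod y UNIV * det M"
proof -
  have "(\<chi> i j. x i * M$i$j * y j) = (\<chi> i. x i *s (\<chi> j. M$i$j * y j))"
    by (simp add: vec_eq_iff mult.assoc)
  then have "det (\<chi> i j. x i * M$i$j * y j) = prod x UNIV * det (\<chi> i j. M$i$j * y j)"
    by (simp add: det_rows_mul)
  also have "det (\<chi> i j. M$i$j * y j) = det (\<chi> j. y j *s (\<chi> i. M$i$j))"
    by (subst det_transpose [symmetric]) (simp add: transpose_def vec_eq_iff mult.commute)
  also have "\<dots> = prod y UNIV * det M"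
    by (subst det_rows_mul) (subst det_transpose [symmetric], simp add: transpose_def)
  finally show ?thesis by simp
qed

lemma cofactor4_scale_rows_cols:
  "cofactor4 (\<chi> i j. y i * M$i$j * y j) i j
     = (\<Prod>k\<in>UNIV. y (of_nat (skip_idx i k))) * (\<Prod>k\<in>UNIV. y (of_nat (skip_idx j k)))
       * cofactor4 M i j"
  unfolding cofactor4_def minor4_def
  using det_scale_rows_cols [of "\<lambda>k. y (of_nat (skip_idx i k))"
      "\<chi> k l. M $ of_nat (skip_idx i k) $ of_nat (skip_idx j l)" "\<lambda>l. y (of_nat (skip_idx j l))"]
  by (simp add: algebra_simps)

lemma cofactor4_0_0: "cofactor4 M 0 0 = M$1$1*M$2$2*M$3$3 + M$1$2*M$2$3*M$3$1 + M$1$3*M$2$1*M$3$2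
   - M$1$1*M$2$3*M$3$2 - M$1$2*M$2$1*M$3$3 - M$1$3*M$2$2*M$3$1"
  by (simp add: cofactor4_def minor4_def det_3 skip_idx_def algebra_simps)

lemma cofactor4_2_2: "cofactor4 M 2 2 = M$0$0*M$1$1*M$3$3 + M$0$1*M$1$3*M$3$0 + M$0$3*M$1$0*M$3$1
   - M$0$0*M$1$3*M$3$1 - M$0$1*M$1$0*M$3$3 - M$0$3*M$1$1*M$3$0"
  by (simp add: cofactor4_def minor4_def det_3 skip_idx_def algebra_simps)

section \<open>The vertex frame, outer normals and the Gram matrix\<close>

lemma vertex_combination_eq_0:
  assumes "sph_tetra_vertices p" and "(\<Sum>k\<in>UNIV. c k *\<^sub>R p k) = 0"
  shows "c i = 0"
proof -
  have inj: "inj p" and ind: "independent (range p)"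
    using assms(1) unfolding sph_tetra_vertices_def by auto
  have "(\<Sum>v\<in>range p. (c \<circ> inv p) v *\<^sub>R v) = (\<Sum>k\<in>UNIV. c k *\<^sub>R p k)"
    using inj by (simp add: sum.reindex)
  then have "(\<Sum>v\<in>range p. (c \<circ> inv p) v *\<^sub>R v) = 0" using assms(2) by simp
  then have "(c \<circ> inv p) (p i) = 0"
    using ind unfolding eucl.independent_explicit by blast
  then show ?thesis using inj by simp
qed

lemma vertex_coordinates_unique:
  assumes "sph_tetra_vertices p" and "(\<Sum>k\<in>UNIV. c k *\<^sub>R p k) = (\<Sum>k\<in>UNIV. d k *\<^sub>R p k)"
  shows "c i = d i"
proof -
  have "(\<Sum>k\<in>UNIV. (c k - d k) *\<^sub>R p k) = 0"
    using assms(2) by (simp add: scaleR_diff_left sum_subtractf)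
  then show ?thesis using vertex_combination_eq_0 [OF assms(1)] by fastforce
qed

lemma sum_two_terms:
  fixes v :: "'n::finite \<Rightarrow> 'a::real_vector"
  assumes "i \<noteq> j"
  shows "(\<Sum>k\<in>UNIV. (if k = i then \<alpha> else if k = j then \<beta> else 0) *\<^sub>R v k) = \<alpha> *\<^sub>R v i + \<beta> *\<^sub>R v j"
proof -
  have "(\<Sum>k\<in>UNIV. (if k = i then \<alpha> else if k = j then \<beta> else 0) *\<^sub>R v k)
      = (\<Sum>k\<in>{i, j}. (if k = i then \<alpha> else if k = j then \<beta> else 0) *\<^sub>R v k)"
    by (rule sum.mono_neutral_right) auto
  then show ?thesis using assms by simp
qed

lemma vertex_pair_independent:
  assumes "sph_tetra_vertices p" and "i \<noteq> j" and "\<alpha> *\<^sub>R p i + \<beta> *\<^sub>R p j = 0"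
  shows "\<alpha> = 0" and "\<beta> = 0"
proof -
  have "(if k = i then \<alpha> else if k = j then \<beta> else 0) = 0" for k
    by (rule vertex_combination_eq_0 [OF assms(1)]) (simp add: sum_two_terms assms(2,3))
  from this [of i] this [of j] show "\<alpha> = 0" "\<beta> = 0" using assms(2) by auto
qed

lemma orthogonal_to_vertices_eq_0:
  assumes "sph_tetra_vertices p" and "\<And>j. x \<bullet> p j = 0"
  shows "x = 0"
proof -
  have inj: "inj p" and ind: "independent (range p)"
    using assms(1) unfolding sph_tetra_vertices_def by auto
  have "card (range p) = dim (UNIV :: (real^4) set)"
    using inj by (simp add: card_image)
  then have "UNIV \<subseteq> span (range p)"
    using eucl.card_eq_dim [of "range p" UNIV] ind by auto
  then have "orthogonal x x"
    by (intro orthogonal_to_span [of x "range p"]) (auto simp: orthogonal_def assms(2))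
  then show ?thesis by (simp add: orthogonal_def)
qed

lemma outer_normal_eq:
  assumes "sph_tetra_vertices p" and "\<And>j. j \<noteq> i \<Longrightarrow> w \<bullet> p j = 0" and "w \<bullet> p i < 0"
  shows "outer_normal p i = (1 / norm w) *\<^sub>R w"
  unfolding outer_normal_def
proof (rule the_equality)
  show "norm ((1 / norm w) *\<^sub>R w) = 1 \<and> (\<forall>j. j \<noteq> i \<longrightarrow> (1 / norm w) *\<^sub>R w \<bullet> p j = 0)
      \<and> (1 / norm w) *\<^sub>R w \<bullet> p i < 0"
    using assms(2,3) by (auto simp: divide_less_0_iff)
next
  fix v assume v: "norm v = 1 \<and> (\<forall>j. j \<noteq> i \<longrightarrow> v \<bullet> p j = 0) \<and> v \<bullet> p i < 0"
  define t where "t = (v \<bullet> p i) / (w \<bullet> p i)"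
  have "(v - t *\<^sub>R w) \<bullet> p j = 0" for j
    using v assms(2,3) by (cases "j = i") (auto simp: t_def inner_diff_left)
  then have vt: "v = t *\<^sub>R w" using orthogonal_to_vertices_eq_0 [OF assms(1)] by force
  have "t > 0" using v assms(3) by (simp add: t_def divide_neg_neg)
  moreover have "w \<noteq> 0" using assms(3) by auto
  ultimately have "t = 1 / norm w" using v vt by (auto simp: field_simps)
  then show "v = (1 / norm w) *\<^sub>R w" using vt by simp
qed

lemma inner_vertices_sq_less_1:
  assumes "sph_tetra_vertices p" and "i \<noteq> j"
  shows "(p i \<bullet> p j)^2 < 1"
proof -
  define t where "t = p i \<bullet> p j"
  have unit: "norm (p i) = 1" "norm (p j) = 1" using assms(1) unfolding sph_tetra_vertices_def by auto
  have "p i \<bullet> p i = 1" "p j \<bullet> p j = 1" using unit by (simp_all add: dot_square_norm)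
  then have "(p i - t *\<^sub>R p j) \<bullet> (p i - t *\<^sub>R p j) = 1 - t^2"
    by (simp add: t_def inner_commute algebra_simps power2_eq_square)
  moreover have "p i - t *\<^sub>R p j \<noteq> 0"
    using vertex_pair_independent(1) [OF assms, of 1 "- t"] by auto
  ultimately show ?thesis unfolding t_def by (metis inner_gt_zero_iff diff_gt_0_iff_gt)
qed

lemma edge_matrix_eq_inner:
  assumes "sph_tetra_vertices p"
  shows "edge_matrix p = (\<chi> i j. p i \<bullet> p j)"
proof -
  have unit: "norm (p i) = 1" for i using assms unfolding sph_tetra_vertices_def by auto
  then have "\<bar>p i \<bullet> p j\<bar> \<le> 1" for i j by (metis Cauchy_Schwarz_ineq2 mult_1)
  then show ?thesis
    unfolding edge_matrix_def edge_len_def using unit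
    by (simp add: vec_eq_iff abs_le_iff dot_square_norm)
qed

lemma det_edge_matrix_pos:
  assumes "sph_tetra_vertices p"
  shows "det (edge_matrix p) > 0"
proof -
  define P :: "real^4^4" where "P = (\<chi> i. p i)"
  have "edge_matrix p = P ** transpose P"
    unfolding edge_matrix_eq_inner [OF assms] P_def
    by (simp add: vec_eq_iff matrix_matrix_mult_def transpose_def inner_vec_def mult.commute)
  then have det: "det (edge_matrix p) = det P ^ 2" by (simp add: det_mul power2_eq_square)
  have "\<forall>c. (\<Sum>i\<in>UNIV. c i *s row i P) = 0 \<longrightarrow> (\<forall>i. c i = 0)"
    using vertex_combination_eq_0 [OF assms]
    by (simp add: P_def row_def scalar_mult_eq_scaleR)
  then have "invertible P"
    unfolding invertible_right_inverse by (simp add: matrix_right_invertible_independent_rows)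
  then show ?thesis unfolding det by (simp add: invertible_det_nz)
qed

text \<open>\<open>K\<close> is a multiple of the adjugate of the edge matrix. Its rows, read in the vertex frame, are
  normals: \<open>w i \<bullet> p j = - \<delta> \<cdot> [i = j]\<close>, hence \<open>w i \<bullet> w j = \<delta> \<cdot> K$j$i\<close>.\<close>

lemma outer_normals_from_inverse:
  assumes tv: "sph_tetra_vertices p" and K: "K ** edge_matrix p = \<delta> *\<^sub>R mat 1" and "\<delta> > 0"
  shows "K$i$i > 0"
    and "outer_normal p i \<bullet> outer_normal p j = K$j$i / (sqrt (K$i$i) * sqrt (K$j$j))"
proof -
  define w where "w i = - (\<Sum>k\<in>UNIV. K$i$k *\<^sub>R p k)" for i
  have wp: "w i \<bullet> p j = (if i = j then - \<delta> else 0)" for i j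
  proof -
    have "w i \<bullet> p j = - (\<Sum>k\<in>UNIV. K$i$k * edge_matrix p $ k $ j)"
      by (simp add: w_def edge_matrix_eq_inner [OF tv] inner_sum_left)
    also have "\<dots> = - (\<delta> *\<^sub>R mat 1 :: real^4^4) $ i $ j"
      by (simp flip: K add: matrix_matrix_mult_def)
    finally show ?thesis by (simp add: mat_def)
  qed
  have ww: "w i \<bullet> w j = \<delta> * K$j$i" for i j
  proof -
    have "w i \<bullet> w j = - (\<Sum>k\<in>UNIV. K$j$k * (w i \<bullet> p k))"
      by (simp add: w_def [of j] inner_sum_right)
    also have "\<dots> = \<delta> * K$j$i"
      by (simp add: wp if_distrib [of "\<lambda>x. _ * x"] cong: if_cong)
    finally show ?thesis .
  qed
  have w_pos: "norm (w i) > 0" for i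
    using wp [of i i] \<open>\<delta> > 0\<close> by auto
  show K_pos: "K$i$i > 0" for i
  proof -
    have "\<delta> * K$i$i > 0" using w_pos [of i] by (simp flip: ww)
    then show ?thesis using \<open>\<delta> > 0\<close> by (simp add: zero_less_mult_iff)
  qed
  have normal: "outer_normal p i = (1 / norm (w i)) *\<^sub>R w i" for i
    by (rule outer_normal_eq [OF tv]) (use wp \<open>\<delta> > 0\<close> in auto)
  have norm_w: "norm (w i) = sqrt \<delta> * sqrt (K$i$i)" for i
    by (simp add: norm_eq_sqrt_inner ww real_sqrt_mult)
  have "outer_normal p i \<bullet> outer_normal p j = (w i \<bullet> w j) / (norm (w i) * norm (w j))"
    by (simp add: normal)
  also have "norm (w i) * norm (w j) = (sqrt \<delta> * sqrt \<delta>) * (sqrt (K$i$i) * sqrt (K$j$j))"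
    by (simp add: norm_w ac_simps)
  also have "sqrt \<delta> * sqrt \<delta> = \<delta>" using \<open>\<delta> > 0\<close> by simp
  also have "w i \<bullet> w j = \<delta> * K$j$i" by (rule ww)
  finally show "outer_normal p i \<bullet> outer_normal p j = K$j$i / (sqrt (K$i$i) * sqrt (K$j$j))"
    using \<open>\<delta> > 0\<close> by simp
qed

lemma dihedral_from_inverse:
  assumes "sph_tetra_vertices p" and "K ** edge_matrix p = \<delta> *\<^sub>R mat 1" and "\<delta> > 0"
  shows "dihedral p i j = arccos (- (K$j$i / (sqrt (K$i$i) * sqrt (K$j$j))))"
  unfolding dihedral_def outer_normals_from_inverse [OF assms] ..

lemma gram_matrix_from_inverse:
  assumes tv: "sph_tetra_vertices p" and K: "K ** edge_matrix p = \<delta> *\<^sub>R mat 1" and "\<delta> > 0"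
    and sym: "transpose K = K"
  shows "gram_matrix p = (\<chi> i j. (1 / sqrt (K$i$i)) * K$i$j * (1 / sqrt (K$j$j)))"
proof -
  note normals = outer_normals_from_inverse [OF assms(1-3)]
  have Kji: "K$j$i = K$i$j" for i j
    using arg_cong [OF sym, of "\<lambda>M. M$i$j"] by (simp add: transpose_def)
  have unit: "norm (outer_normal p k) = 1" for k
    using normals(2) [of k k] normals(1) [of k] by (simp add: norm_eq_sqrt_inner)
  have "cos (dihedral p i j) = - (K$i$j / (sqrt (K$i$i) * sqrt (K$j$j)))" for i j
  proof -
    have "\<bar>- (outer_normal p i \<bullet> outer_normal p j)\<bar> \<le> 1"
      using Cauchy_Schwarz_ineq2 [of "outer_normal p i" "outer_normal p j"] unit by simp
    then have "cos (dihedral p i j) = - (outer_normal p i \<bullet> outer_normal p j)"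
      unfolding dihedral_def by (rule cos_arccos_abs)
    then show ?thesis by (simp add: normals(2) Kji)
  qed
  moreover have "(1 / sqrt (K$i$i)) * K$i$i * (1 / sqrt (K$i$i)) = 1" for i
    using normals(1) [of i] by (simp add: field_simps)
  ultimately show ?thesis
    unfolding gram_matrix_def vec_eq_iff by (simp add: field_simps)
qed

section \<open>Matrices of \<open>\<int>\<^sub>2\<close>-symmetric shape\<close>

text \<open>The entry depends only on the orbit of the edge \<open>{i, j}\<close> under the swaps \<open>0 \<leftrightarrow> 1\<close>,
  \<open>2 \<leftrightarrow> 3\<close>; the orbits are \<open>{01}\<close>, \<open>{23}\<close>, \<open>{02, 13}\<close> and \<open>{03, 12}\<close>.\<close>

definition z2_matrix :: "real \<Rightarrow> real \<Rightarrow> real \<Rightarrow> real \<Rightarrow> real \<Rightarrow> real \<Rightarrow> real^4^4" where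
  "z2_matrix m00 m01 m02 m03 m22 m23 = (\<chi> i j.
     if i = j then (if i = 0 \<or> i = 1 then m00 else m22)
     else if {i, j} = {0, 1} then m01
     else if {i, j} = {2, 3} then m23
     else if {i, j} = {0, 2} \<or> {i, j} = {1, 3} then m02
     else m03)"

definition z2_det :: "real \<Rightarrow> real \<Rightarrow> real \<Rightarrow> real \<Rightarrow> real" where
  "z2_det a b c d = 1 - a^2 - d^2 - 2*b^2 - 2*c^2 + a^2*d^2 + 4*a*b*c + 4*b*c*d
     - 2*a*d*b^2 - 2*a*d*c^2 + b^4 + c^4 - 2*b^2*c^2"

definition z2_cof00 :: "real \<Rightarrow> real \<Rightarrow> real \<Rightarrow> real \<Rightarrow> real" where
  "z2_cof00 a b c d = 1 - b^2 - c^2 - d^2 + 2*b*c*d"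
definition z2_cof01 :: "real \<Rightarrow> real \<Rightarrow> real \<Rightarrow> real \<Rightarrow> real" where
  "z2_cof01 a b c d = - a + a*d^2 + 2*b*c - b^2*d - c^2*d"
definition z2_cof02 :: "real \<Rightarrow> real \<Rightarrow> real \<Rightarrow> real \<Rightarrow> real" where
  "z2_cof02 a b c d = a*c - a*b*d - b + c*d + b^3 - b*c^2"
definition z2_cof03 :: "real \<Rightarrow> real \<Rightarrow> real \<Rightarrow> real \<Rightarrow> real" where
  "z2_cof03 a b c d = - a*c*d + a*b + b*d - c - b^2*c + c^3"
definition z2_cof22 :: "real \<Rightarrow> real \<Rightarrow> real \<Rightarrow> real \<Rightarrow> real" where
  "z2_cof22 a b c d = 1 - a^2 - b^2 - c^2 + 2*a*b*c"
definition z2_cof23 :: "real \<Rightarrow> real \<Rightarrow> real \<Rightarrow> real \<Rightarrow> real" where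
  "z2_cof23 a b c d = - d + 2*b*c + a^2*d - a*c^2 - a*b^2"

lemmas z2_cof_defs = z2_det_def z2_cof00_def z2_cof01_def z2_cof02_def z2_cof03_def
  z2_cof22_def z2_cof23_def

definition z2_adjugate :: "real \<Rightarrow> real \<Rightarrow> real \<Rightarrow> real \<Rightarrow> real^4^4" where
  "z2_adjugate a b c d = z2_matrix (z2_cof00 a b c d) (z2_cof01 a b c d) (z2_cof02 a b c d)
     (z2_cof03 a b c d) (z2_cof22 a b c d) (z2_cof23 a b c d)"

lemma det_z2_edge_matrix: "det (z2_matrix 1 a b c 1 d) = z2_det a b c d"
  by (simp add: det_4 z2_matrix_def doubleton_eq_iff z2_det_def) algebra

lemma cofactor4_z2_edge_matrix:
  "cofactor4 (z2_matrix 1 a b c 1 d) 0 0 = z2_cof00 a b c d"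
  "cofactor4 (z2_matrix 1 a b c 1 d) 2 2 = z2_cof22 a b c d"
  by (simp_all add: cofactor4_0_0 cofactor4_2_2 z2_matrix_def doubleton_eq_iff z2_cof_defs; algebra)+

lemma z2_adjugate_mult: "z2_adjugate a b c d ** z2_matrix 1 a b c 1 d = z2_det a b c d *\<^sub>R mat 1"
  unfolding vec_eq_iff matrix_matrix_mult_def all_4
  by (simp add: sum_UNIV_4 mat_def z2_adjugate_def z2_matrix_def doubleton_eq_iff z2_cof_defs; algebra)

lemma det_z2_adjugate: "det (z2_adjugate a b c d) = z2_det a b c d ^ 3"
  by (simp add: det_4 z2_adjugate_def z2_matrix_def doubleton_eq_iff z2_cof_defs) algebra

lemma cofactor4_z2_adjugate:
  "cofactor4 (z2_adjugate a b c d) 0 0 = z2_det a b c d ^ 2"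
  "cofactor4 (z2_adjugate a b c d) 2 2 = z2_det a b c d ^ 2"
  by (simp_all add: cofactor4_0_0 cofactor4_2_2 z2_adjugate_def z2_matrix_def doubleton_eq_iff
      z2_cof_defs; algebra)+

text \<open>Instances of Jacobi's identity: a \<open>2 \<times> 2\<close> minor of the adjugate is, up to sign, the
  determinant times the complementary \<open>2 \<times> 2\<close> minor of the matrix.\<close>

lemma z2_cofactor_identities:
  "z2_cof22 a b c d * z2_cof22 a b c d - (z2_cof23 a b c d)^2 = z2_det a b c d * (1 - a^2)"
  "z2_cof00 a b c d * z2_cof00 a b c d - (z2_cof01 a b c d)^2 = z2_det a b c d * (1 - d^2)"
  "z2_cof00 a b c d * z2_cof22 a b c d - (z2_cof02 a b c d)^2 = z2_det a b c d * (1 - b^2)"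
  "z2_cof00 a b c d * z2_cof22 a b c d - (z2_cof03 a b c d)^2 = z2_det a b c d * (1 - c^2)"
  "z2_cof00 a b c d * z2_cof22 a b c d - z2_cof01 a b c d * z2_cof23 a b c d = z2_det a b c d * (1 - a*d)"
  "z2_cof23 a b c d * z2_cof00 a b c d - z2_cof01 a b c d * z2_cof22 a b c d = z2_det a b c d * (a - d)"
  unfolding z2_cof_defs by algebra+

lemma transpose_z2_matrix:
  "transpose (z2_matrix m00 m01 m02 m03 m22 m23) = z2_matrix m00 m01 m02 m03 m22 m23"
  by (simp add: transpose_def z2_matrix_def vec_eq_iff insert_commute)

section \<open>The \<open>\<int>\<^sub>2\<close>-rotation swaps the vertices of both fixed edges\<close>

lemma orthogonal_projection_exists:
  fixes W :: "'a::euclidean_space set"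
  obtains P where "linear P" and "\<And>x. P x \<in> span W"
    and "\<And>x w. w \<in> span W \<Longrightarrow> orthogonal (x - P x) w"
    and "\<And>x y. y \<in> span W \<Longrightarrow> (\<And>w. w \<in> span W \<Longrightarrow> orthogonal (x - y) w) \<Longrightarrow> P x = y"
proof -
  define P where "P x = (SOME y. y \<in> span W \<and> (\<forall>w\<in>span W. orthogonal (x - y) w))" for x
  have P: "P x \<in> span W \<and> (\<forall>w\<in>span W. orthogonal (x - P x) w)" for x
  proof -
    obtain y z where "y \<in> span W" "\<And>w. w \<in> span W \<Longrightarrow> orthogonal z w" "x = y + z"
      using orthogonal_subspace_decomp_exists by blast
    then have "\<exists>y. y \<in> span W \<and> (\<forall>w\<in>span W. orthogonal (x - y) w)" by auto
    then show ?thesis unfolding P_def by (rule someI_ex)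
  qed
  have unique: "P x = y" if "y \<in> span W" "\<And>w. w \<in> span W \<Longrightarrow> orthogonal (x - y) w" for x y
  proof -
    have "y - P x \<in> span W" using that(1) P span_diff by blast
    then have "orthogonal (y - P x) (y - P x)"
      using P [of x] that(2) [of "y - P x"]
      by (simp add: orthogonal_def inner_diff_left [of x y] inner_diff_left [of x "P x"]
          inner_diff_left [of y "P x"])
    then show ?thesis by (simp add: orthogonal_self)
  qed
  have "linear P"
  proof (rule linearI)
    show "P (x + y) = P x + P y" for x y
      using P [of x] P [of y] by (intro unique) (auto simp: span_add orthogonal_def algebra_simps)
    show "P (c *\<^sub>R x) = c *\<^sub>R P x" for c x
      using P [of x] by (intro unique) (auto simp: span_mul orthogonal_def algebra_simps)
  qed
  then show thesis using that P unique by blast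
qed

lemma orthogonal_reflection_exists:
  fixes W :: "'a::euclidean_space set"
  obtains R where "linear R" and "\<And>x. x \<in> span W \<Longrightarrow> R x = x"
    and "\<And>x. (\<forall>w\<in>W. orthogonal x w) \<Longrightarrow> R x = - x"
    and "\<And>x. R (R x) = x" and "\<And>x y. R x \<bullet> R y = x \<bullet> y" and "\<And>x. R x = x \<Longrightarrow> x \<in> span W"
    and "\<And>g. linear g \<Longrightarrow> (\<forall>x\<in>span W. g x = x) \<Longrightarrow> (\<forall>x. (\<forall>w\<in>W. orthogonal x w) \<longrightarrow> g x = - x)
           \<Longrightarrow> g = R"
proof -
  obtain P where lin: "linear P" and P_span: "\<And>x. P x \<in> span W"
    and P_orth: "\<And>x w. w \<in> span W \<Longrightarrow> orthogonal (x - P x) w"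
    and P_unique: "\<And>x y. y \<in> span W \<Longrightarrow> (\<And>w. w \<in> span W \<Longrightarrow> orthogonal (x - y) w) \<Longrightarrow> P x = y"
    using orthogonal_projection_exists [of W] by blast
  define R where "R x = 2 *\<^sub>R P x - x" for x
  have fix_span: "P x = x" if "x \<in> span W" for x
    using that by (intro P_unique) (auto simp: orthogonal_def)
  have perp_W: "(\<forall>w\<in>W. orthogonal x w) \<longleftrightarrow> (\<forall>w\<in>span W. orthogonal x w)" for x
    by (meson orthogonal_to_span span_base)
  have "linear R"
    unfolding R_def by (rule linearI) (simp_all add: linear_add [OF lin] linear_cmul [OF lin]
        algebra_simps)
  moreover have "R x = x" if "x \<in> span W" for x
    using fix_span [OF that] by (simp add: R_def scaleR_2)
  moreover have "R x = - x" if "\<forall>w\<in>W. orthogonal x w" for x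
  proof -
    have "P x = 0" by (rule P_unique) (use that in \<open>auto simp: perp_W span_zero\<close>)
    then show ?thesis by (simp add: R_def)
  qed
  moreover have "R (R x) = x" for x
  proof -
    have "P (R x) = P x"
      using linear_diff [OF lin] linear_cmul [OF lin] fix_span [OF P_span]
      by (simp add: R_def) (simp add: scaleR_2)
    then show ?thesis by (simp add: R_def [of "R x"]) (simp add: R_def)
  qed
  moreover have "R x \<bullet> R y = x \<bullet> y" for x y
  proof -
    have "P x \<bullet> y = P x \<bullet> P y" "x \<bullet> P y = P x \<bullet> P y"
      using P_orth [OF P_span [of x], of y] P_orth [OF P_span [of y], of x]
      unfolding orthogonal_def inner_diff_left by (simp_all add: inner_commute)
    then show ?thesis by (simp add: R_def inner_diff_right algebra_simps)
  qed
  moreover have "x \<in> span W" if "R x = x" for x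
  proof -
    have "2 *\<^sub>R P x = 2 *\<^sub>R x" using that by (simp add: R_def algebra_simps) (simp add: scaleR_2)
    then show ?thesis using P_span [of x] by simp
  qed
  moreover have "g = R"
    if "linear g" "\<forall>x\<in>span W. g x = x" "\<forall>x. (\<forall>w\<in>W. orthogonal x w) \<longrightarrow> g x = - x" for g
  proof
    fix x
    have "g x = g (P x) + g (x - P x)" using linear_add [OF that(1), of "P x" "x - P x"] by simp
    also have "g (P x) = P x" using that(2) P_span by blast
    also have "g (x - P x) = - (x - P x)" using that(3) P_orth perp_W by blast
    finally show "g x = R x" by (simp add: R_def scaleR_2 add_diff_eq)
  qed
  ultimately show thesis by (rule that)
qed

lemma z2_rotation_reflection:
  fixes p :: "4 \<Rightarrow> real^4"
  defines "W \<equiv> {p 0 + p 1, p 2 + p 3}"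
  shows "linear (z2_rotation p)" and "\<And>x. z2_rotation p (z2_rotation p x) = x"
    and "\<And>x y. z2_rotation p x \<bullet> z2_rotation p y = x \<bullet> y"
    and "\<And>x. x \<in> span W \<Longrightarrow> z2_rotation p x = x"
    and "\<And>x. z2_rotation p x = x \<Longrightarrow> x \<in> span W"
proof -
  obtain R where R: "linear R" "\<And>x. x \<in> span W \<Longrightarrow> R x = x"
    "\<And>x. (\<forall>w\<in>W. orthogonal x w) \<Longrightarrow> R x = - x"
    "\<And>x. R (R x) = x" "\<And>x y. R x \<bullet> R y = x \<bullet> y" "\<And>x. R x = x \<Longrightarrow> x \<in> span W"
    and unique: "\<And>g. linear g \<Longrightarrow> (\<forall>x\<in>span W. g x = x)
      \<Longrightarrow> (\<forall>x. (\<forall>w\<in>W. orthogonal x w) \<longrightarrow> g x = - x) \<Longrightarrow> g = R"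
    using orthogonal_reflection_exists [of W] by blast
  have "z2_rotation p = R"
    unfolding z2_rotation_def
  proof (rule the_equality)
    show "linear R \<and> (\<forall>x\<in>span {p 0 + p 1, p 2 + p 3}. R x = x)
        \<and> (\<forall>x. orthogonal x (p 0 + p 1) \<and> orthogonal x (p 2 + p 3) \<longrightarrow> R x = - x)"
      using R(1-3) by (simp add: W_def)
  next
    fix g assume "linear g \<and> (\<forall>x\<in>span {p 0 + p 1, p 2 + p 3}. g x = x)
        \<and> (\<forall>x. orthogonal x (p 0 + p 1) \<and> orthogonal x (p 2 + p 3) \<longrightarrow> g x = - x)"
    then show "g = R" by (intro unique) (auto simp: W_def)
  qed
  then show "linear (z2_rotation p)" "\<And>x. z2_rotation p (z2_rotation p x) = x"
    "\<And>x y. z2_rotation p x \<bullet> z2_rotation p y = x \<bullet> y"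
    "\<And>x. x \<in> span W \<Longrightarrow> z2_rotation p x = x" "\<And>x. z2_rotation p x = x \<Longrightarrow> x \<in> span W"
    using R by simp_all
qed

lemma involution_swaps_vertex_pair:
  assumes tv: "sph_tetra_vertices p" and lin: "linear F" and inv: "\<And>x. F (F x) = x"
    and ij: "i \<noteq> j" and moved: "F (p i) \<noteq> p i"
    and Fi: "F (p i) = \<alpha> *\<^sub>R p i + \<beta> *\<^sub>R p j" and Fj: "F (p j) = \<gamma> *\<^sub>R p i + \<delta> *\<^sub>R p j"
    and nonneg: "\<alpha> \<ge> 0" "\<beta> \<ge> 0" "\<gamma> \<ge> 0" "\<delta> \<ge> 0"
    and sums: "\<alpha> + \<gamma> = 1" "\<beta> + \<delta> = 1"
  shows "F (p i) = p j" and "F (p j) = p i"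
proof -
  have "p i = \<alpha> *\<^sub>R F (p i) + \<beta> *\<^sub>R F (p j)"
    using inv [of "p i"] Fi lin by (simp add: linear_add linear_cmul)
  then have "(\<alpha> * \<alpha> + \<beta> * \<gamma> - 1) *\<^sub>R p i + (\<alpha> * \<beta> + \<beta> * \<delta>) *\<^sub>R p j = 0"
    unfolding Fi Fj by (simp add: algebra_simps)
  from vertex_pair_independent [OF tv ij this]
  have sq: "\<alpha> * \<alpha> + \<beta> * \<gamma> = 1" and "\<beta> * (\<alpha> + \<delta>) = 0"
    by (simp_all add: algebra_simps)
  moreover have "\<beta> \<noteq> 0"
  proof
    assume "\<beta> = 0"
    then have "\<alpha> = 1" using sq nonneg(1) square_eq_1_iff [of \<alpha>] by auto
    then show False using moved Fi \<open>\<beta> = 0\<close> by simp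
  qed
  ultimately have "\<alpha> = 0" "\<delta> = 0" using nonneg by auto
  then show "F (p i) = p j" "F (p j) = p i" using Fi Fj sums by simp_all
qed

lemma z2_rotation_vertex_in_cone:
  assumes tv: "sph_tetra_vertices p" and "z2_symmetric p"
  obtains c where "\<And>k. c k \<ge> 0" and "z2_rotation p (p i) = (\<Sum>k\<in>UNIV. c k *\<^sub>R p k)"
proof -
  have "p i = (\<Sum>k\<in>UNIV. (if k = i then 1 else 0) *\<^sub>R p k)"
    by (simp add: if_distrib [of "\<lambda>t. t *\<^sub>R _"] cong: if_cong)
  moreover have "norm (p i) = 1" using tv unfolding sph_tetra_vertices_def by blast
  ultimately have "p i \<in> sph_tetra p"
    unfolding sph_tetra_def by (intro CollectI conjI exI [of _ "\<lambda>k. if k = i then 1 else 0"]) auto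
  then have "z2_rotation p (p i) \<in> sph_tetra p"
    using assms(2) unfolding z2_symmetric_def by blast
  then show thesis using that unfolding sph_tetra_def by blast
qed

lemma vertex_notin_span_midpoints:
  fixes i j :: 4
  assumes tv: "sph_tetra_vertices p" and ij: "(i = 0 \<and> j = 1) \<or> (i = 2 \<and> j = 3)"
  shows "p i \<notin> span {p 0 + p 1, p 2 + p 3}"
proof
  assume "p i \<in> span {p 0 + p 1, p 2 + p 3}"
  then obtain \<alpha> \<beta> where "p i = \<alpha> *\<^sub>R (p 0 + p 1) + \<beta> *\<^sub>R (p 2 + p 3)"
    unfolding span_breakdown_eq span_singleton by (auto simp: algebra_simps)
  then have "(\<Sum>k\<in>UNIV. (if k = i then 1 else 0) *\<^sub>R p k)
      = (\<Sum>k\<in>UNIV. (if k = 0 \<or> k = 1 then \<alpha> else \<beta>) *\<^sub>R p k)"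
    using ij by (auto simp: sum_UNIV_4 algebra_simps)
  from vertex_coordinates_unique [OF tv this, of i] vertex_coordinates_unique [OF tv this, of j]
  show False using ij by auto
qed

text \<open>The images of \<open>p i\<close> and \<open>p j\<close> lie in the cone over the vertices and add up to
  \<open>p i + p j\<close>, so they are nonnegative combinations of \<open>p i\<close> and \<open>p j\<close> alone.\<close>

lemma z2_rotation_swaps_pair:
  fixes i j :: 4
  assumes tv: "sph_tetra_vertices p" and z2: "z2_symmetric p"
    and ij: "(i = 0 \<and> j = 1) \<or> (i = 2 \<and> j = 3)"
  shows "z2_rotation p (p i) = p j" and "z2_rotation p (p j) = p i"
proof -
  let ?R = "z2_rotation p"
  note R = z2_rotation_reflection [where p = p]
  have "i \<noteq> j" using ij by auto
  obtain c where c: "\<And>k. c k \<ge> 0" "?R (p i) = (\<Sum>k\<in>UNIV. c k *\<^sub>R p k)"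
    using z2_rotation_vertex_in_cone [OF tv z2] by blast
  obtain d where d: "\<And>k. d k \<ge> 0" "?R (p j) = (\<Sum>k\<in>UNIV. d k *\<^sub>R p k)"
    using z2_rotation_vertex_in_cone [OF tv z2] by blast
  have "?R (p i) + ?R (p j) = p i + p j"
    using linear_add [OF R(1), of "p i" "p j", symmetric] R(4) [of "p i + p j"] ij
    by (auto intro: span_base)
  then have "(\<Sum>k\<in>UNIV. (c k + d k) *\<^sub>R p k)
      = (\<Sum>k\<in>UNIV. (if k = i then 1 else if k = j then 1 else 0) *\<^sub>R p k)"
    unfolding c(2) d(2) sum_two_terms [OF \<open>i \<noteq> j\<close>] by (simp add: scaleR_add_left sum.distrib)
  then have cd_sum: "c k + d k = (if k = i then 1 else if k = j then 1 else 0)" for k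
    by (rule vertex_coordinates_unique [OF tv])
  have "c k = 0 \<and> d k = 0" if "k \<noteq> i" "k \<noteq> j" for k
    using add_nonneg_eq_0_iff [OF c(1) [of k] d(1) [of k]] cd_sum [of k] that by simp
  then have "(\<Sum>k\<in>UNIV. c k *\<^sub>R p k)
      = (\<Sum>k\<in>UNIV. (if k = i then c i else if k = j then c j else 0) *\<^sub>R p k)"
    and "(\<Sum>k\<in>UNIV. d k *\<^sub>R p k)
      = (\<Sum>k\<in>UNIV. (if k = i then d i else if k = j then d j else 0) *\<^sub>R p k)"
    by (auto intro!: sum.cong)
  then have Ri: "?R (p i) = c i *\<^sub>R p i + c j *\<^sub>R p j"
    and Rj: "?R (p j) = d i *\<^sub>R p i + d j *\<^sub>R p j"
    unfolding c(2) d(2) sum_two_terms [OF \<open>i \<noteq> j\<close>] by simp_all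
  have "?R (p i) \<noteq> p i" using R(5) vertex_notin_span_midpoints [OF tv ij] by blast
  from involution_swaps_vertex_pair [OF tv R(1) R(2) \<open>i \<noteq> j\<close> this Ri Rj]
  show "?R (p i) = p j" "?R (p j) = p i"
    using c(1) d(1) cd_sum [of i] cd_sum [of j] \<open>i \<noteq> j\<close> by auto
qed

lemma z2_symmetric_inner:
  assumes "sph_tetra_vertices p" and "z2_symmetric p"
  shows "p 1 \<bullet> p 3 = p 0 \<bullet> p 2" and "p 1 \<bullet> p 2 = p 0 \<bullet> p 3"
  using z2_rotation_reflection(3) [where p = p] z2_rotation_swaps_pair [OF assms, of 0 1]
    z2_rotation_swaps_pair [OF assms, of 2 3] by metis+

lemma z2_symmetric_edge_matrix:
  assumes "sph_tetra_vertices p" and "z2_symmetric p"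
  shows "edge_matrix p = z2_matrix 1 (p 0 \<bullet> p 1) (p 0 \<bullet> p 2) (p 0 \<bullet> p 3) 1 (p 2 \<bullet> p 3)"
proof -
  have "p k \<bullet> p k = 1" for k
    using assms(1) unfolding sph_tetra_vertices_def by (simp add: dot_square_norm)
  then show ?thesis
    using z2_symmetric_inner [OF assms]
    unfolding edge_matrix_eq_inner [OF assms(1)] vec_eq_iff all_4
    by (simp add: z2_matrix_def doubleton_eq_iff inner_commute)
qed

section \<open>Spherical trigonometry from cofactor identities\<close>

lemma arccos_cofactor_ratio:
  fixes P Q X \<Delta> y :: real
  assumes "P > 0" and "Q > 0" and "\<Delta> > 0" and jacobi: "P * Q - X^2 = \<Delta> * (1 - y^2)"
    and "y^2 < 1"
  defines "t \<equiv> X / (sqrt P * sqrt Q)"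
  shows "cos (arccos (- t)) = - t" and "arccos (- t) \<in> {0<..<pi}"
    and "sin (arccos (- t)) = sqrt \<Delta> * sin (arccos y) / (sqrt P * sqrt Q)"
proof -
  have "1 - t^2 = \<Delta> * (1 - y^2) / (P * Q)"
    using assms(1,2) jacobi by (simp add: t_def power_divide real_sqrt_mult [symmetric] field_simps)
  moreover have "\<Delta> * (1 - y^2) / (P * Q) > 0" using assms(1-3,5) by simp
  ultimately have "t^2 < 1" and sqrt_t: "sqrt (1 - t^2) = sqrt \<Delta> * sqrt (1 - y^2) / (sqrt P * sqrt Q)"
    by (simp_all add: real_sqrt_mult real_sqrt_divide)
  then have "\<bar>t\<bar> < 1" by (simp add: abs_square_less_1)
  then show "cos (arccos (- t)) = - t" and "arccos (- t) \<in> {0<..<pi}"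
    using arccos_lt_bounded [of "- t"] by (auto simp: cos_arccos_abs)
  show "sin (arccos (- t)) = sqrt \<Delta> * sin (arccos y) / (sqrt P * sqrt Q)"
    using \<open>\<bar>t\<bar> < 1\<close> \<open>y^2 < 1\<close> sqrt_t by (simp add: sin_arccos_abs abs_square_less_1)
qed

lemma sine_ratio_from_cofactors:
  fixes P Q X \<Delta> y :: real
  assumes "P > 0" and "Q > 0" and "\<Delta> > 0" and "P * Q - X^2 = \<Delta> * (1 - y^2)" and "y^2 < 1"
  shows "sqrt (P * Q / \<Delta>) = sin (arccos y) / sin (arccos (- (X / (sqrt P * sqrt Q))))"
proof -
  have "sin (arccos y) > 0"
    using \<open>y^2 < 1\<close> by (simp add: abs_square_less_1 sin_arccos_abs)
  then show ?thesis
    using arccos_cofactor_ratio(3) [OF assms] assms(1-3)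
    by (simp add: real_sqrt_mult real_sqrt_divide)
qed

lemma sin_half_mult_nonneg:
  fixes x y :: real
  assumes "0 \<le> x * y" and "\<bar>x\<bar> \<le> 2 * pi" and "\<bar>y\<bar> \<le> 2 * pi"
  shows "0 \<le> sin (x / 2) * sin (y / 2)"
proof (cases "0 \<le> x \<and> 0 \<le> y")
  case True
  then show ?thesis using assms by (intro mult_nonneg_nonneg sin_ge_zero) auto
next
  case False
  then have "x \<le> 0" "y \<le> 0" using assms(1) by (auto simp: zero_le_mult_iff)
  then have "0 \<le> sin (- x / 2) * sin (- y / 2)"
    using assms by (intro mult_nonneg_nonneg sin_ge_zero) auto
  then show ?thesis by simp
qed

text \<open>The sign hypothesis selects the right square root of
  \<open>sin (x / 2)\<^sup>2 = u\<^sup>2 sin (y / 2)\<^sup>2\<close>.\<close>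

lemma half_angle_ratio:
  fixes u x y :: real
  assumes "u \<ge> 0" and "u^2 * (1 - cos y) = 1 - cos x" and "0 \<le> x * y"
    and "\<bar>x\<bar> \<le> 2 * pi" and "\<bar>y\<bar> \<le> 2 * pi" and "sin (y / 2) \<noteq> 0"
  shows "u = sin (x / 2) / sin (y / 2)"
proof -
  have half: "sin (t / 2)^2 = (1 - cos t) / 2" for t :: real
    using cos_double_sin [of "t / 2"] by simp
  have sq: "sin (x / 2)^2 = (u * sin (y / 2))^2"
    using assms(2) by (simp add: half power_mult_distrib)
  have sign: "0 \<le> sin (x / 2) * sin (y / 2)"
    using sin_half_mult_nonneg [OF assms(3-5)] .
  have "sin (x / 2) = u * sin (y / 2)"
  proof (cases "sin (x / 2) = u * sin (y / 2)")
    case False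
    then have "sin (x / 2) = - (u * sin (y / 2))" using sq by (simp add: power2_eq_iff)
    then have "u * sin (y / 2)^2 \<le> 0" using sign by (simp add: power2_eq_square)
    then have "u = 0" using assms(1,6) by (simp add: mult_le_0_iff)
    then show ?thesis using sq by simp
  qed
  then show ?thesis using assms(6) by simp
qed

lemma sgn_cos_diff:
  fixes x y :: real
  assumes "0 \<le> x" "x \<le> pi" "0 \<le> y" "y \<le> pi"
  shows "sgn (cos x - cos y) = sgn (y - x)"
  using cos_mono_less_eq [OF assms] cos_mono_less_eq [OF assms(3,4,1,2)]
  by (cases x y rule: linorder_cases) (auto simp: sgn_if)

lemma cos_diff_mult_nonneg:
  fixes x y x' y' :: real
  assumes "x \<in> {0..pi}" "y \<in> {0..pi}" "x' \<in> {0..pi}" "y' \<in> {0..pi}"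
    and "0 \<le> (cos x - cos y) * (cos x' - cos y')"
  shows "0 \<le> (x - y) * (x' - y')"
proof -
  have "(x - y) * (x' - y') = (y - x) * (y' - x')" by (simp add: algebra_simps)
  then have "sgn ((x - y) * (x' - y')) = sgn ((cos x - cos y) * (cos x' - cos y'))"
    using assms(1-4) by (simp add: sgn_mult sgn_cos_diff)
  then show ?thesis using assms(5) by (metis sgn_less not_le)
qed

lemma half_angle_cosine_relations:
  fixes A D lA lD X00 X01 X22 X23 \<Delta> :: real
  assumes "\<Delta> > 0" and "X00 > 0" and "X22 > 0"
    and "cos A = - (X23 / X22)" and "cos D = - (X01 / X00)"
    and "sin A = sqrt \<Delta> * sin lA / X22" and "sin D = sqrt \<Delta> * sin lD / X00"
    and "X00 * X22 - X01 * X23 = \<Delta> * (1 - cos lA * cos lD)"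
  shows "X00 * X22 / \<Delta> * (1 - cos (A + D)) = 1 - cos (lA + lD)"
    and "X00 * X22 / \<Delta> * (1 - cos (D - A)) = 1 - cos (lA - lD)"
proof -
  have "sin A * sin D = (sqrt \<Delta> * sqrt \<Delta>) * (sin lA * sin lD) / (X22 * X00)"
    using assms(6,7) by (simp add: ac_simps)
  also have "sqrt \<Delta> * sqrt \<Delta> = \<Delta>" using assms(1) by simp
  finally have sines: "X00 * X22 / \<Delta> * (sin A * sin D) = sin lA * sin lD"
    using assms(1-3) by (simp add: field_simps)
  have "cos A * cos D = X01 * X23 / (X00 * X22)"
    unfolding assms(4,5) by (simp add: ac_simps)
  then have cosines: "X00 * X22 / \<Delta> * (1 - cos A * cos D) = 1 - cos lA * cos lD"
    using assms(1-3,8) by (simp add: field_simps)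
  show "X00 * X22 / \<Delta> * (1 - cos (A + D)) = 1 - cos (lA + lD)"
    using sines cosines by (simp add: cos_add algebra_simps)
  show "X00 * X22 / \<Delta> * (1 - cos (D - A)) = 1 - cos (lA - lD)"
    using sines cosines by (simp add: cos_diff algebra_simps)
qed

lemma half_angle_identities:
  fixes a d X00 X01 X22 X23 \<Delta> :: real
  assumes pos: "\<Delta> > 0" "X00 > 0" "X22 > 0" and unit: "a^2 < 1" "d^2 < 1"
    and jA: "X22 * X22 - X23^2 = \<Delta> * (1 - a^2)" and jD: "X00 * X00 - X01^2 = \<Delta> * (1 - d^2)"
    and jAD: "X00 * X22 - X01 * X23 = \<Delta> * (1 - a * d)"
    and jS: "X23 * X00 - X01 * X22 = \<Delta> * (a - d)"
  defines "u \<equiv> sqrt (X00 * X22 / \<Delta>)"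
    and "A \<equiv> arccos (- (X23 / X22))" and "D \<equiv> arccos (- (X01 / X00))"
  shows "u = sin ((arccos a + arccos d) / 2) / sin ((A + D) / 2)"
    and "A \<noteq> D \<Longrightarrow> u = sin ((arccos a - arccos d) / 2) / sin ((D - A) / 2)"
proof -
  define lA lD where "lA = arccos a" and "lD = arccos d"
  have "\<bar>a\<bar> \<le> 1" "\<bar>d\<bar> \<le> 1" using unit by (simp_all add: abs_square_less_1)
  then have cos_l: "cos lA = a" "cos lD = d" and "lA \<in> {0..pi}" "lD \<in> {0..pi}"
    using arccos_bounded by (auto simp: lA_def lD_def cos_arccos_abs abs_le_iff)
  note ratioA = arccos_cofactor_ratio [OF pos(3) pos(3) pos(1) jA unit(1)]
  note ratioD = arccos_cofactor_ratio [OF pos(2) pos(2) pos(1) jD unit(2)]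
  have cos_AD: "cos A = - (X23 / X22)" "cos D = - (X01 / X00)"
    and sin_AD: "sin A = sqrt \<Delta> * sin lA / X22" "sin D = sqrt \<Delta> * sin lD / X00"
    and AD: "A \<in> {0<..<pi}" "D \<in> {0<..<pi}"
    using ratioA ratioD pos by (simp_all add: A_def D_def lA_def lD_def)
  have jAD': "X00 * X22 - X01 * X23 = \<Delta> * (1 - cos lA * cos lD)" using jAD cos_l by simp
  note rel = half_angle_cosine_relations [OF pos cos_AD sin_AD jAD']
  have u: "u \<ge> 0" "u^2 = X00 * X22 / \<Delta>" using pos by (simp_all add: u_def)
  show "u = sin ((arccos a + arccos d) / 2) / sin ((A + D) / 2)"
    unfolding lA_def [symmetric] lD_def [symmetric]
  proof (rule half_angle_ratio [OF u(1)])
    show "sin ((A + D) / 2) \<noteq> 0" using AD by (intro sin_gt_zero [THEN less_imp_neq, symmetric]) auto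
  qed (use rel(1) u(2) AD \<open>lA \<in> _\<close> \<open>lD \<in> _\<close> in auto)
  assume "A \<noteq> D"
  have "(cos D - cos A) * (cos lA - cos lD) = (X23 * X00 - X01 * X22) / (X00 * X22) * (a - d)"
    unfolding cos_AD cos_l using pos by (simp add: field_simps)
  also have "\<dots> = \<Delta> * (a - d)^2 / (X00 * X22)"
    unfolding jS by (simp add: power2_eq_square)
  finally have "0 \<le> (cos D - cos A) * (cos lA - cos lD)" using pos by simp
  moreover have "D \<in> {0..pi}" "A \<in> {0..pi}" using AD by auto
  ultimately have "0 \<le> (D - A) * (lA - lD)"
    using cos_diff_mult_nonneg \<open>lA \<in> _\<close> \<open>lD \<in> _\<close> by blast
  then have sign: "0 \<le> (lA - lD) * (D - A)" by (simp only: mult.commute)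
  have "sin ((D - A) / 2) \<noteq> 0"
    using sin_eq_0_pi [of "(D - A) / 2"] AD \<open>A \<noteq> D\<close> by auto
  moreover have "u^2 * (1 - cos (D - A)) = 1 - cos (lA - lD)" using rel(2) u(2) by simp
  moreover have "\<bar>lA - lD\<bar> \<le> 2 * pi" "\<bar>D - A\<bar> \<le> 2 * pi"
    using AD \<open>lA \<in> _\<close> \<open>lD \<in> _\<close> by auto
  ultimately show "u = sin ((arccos a - arccos d) / 2) / sin ((D - A) / 2)"
    unfolding lA_def [symmetric] lD_def [symmetric]
    using half_angle_ratio [OF u(1) _ sign] by blast
qed

section \<open>The principal and dual parameters\<close>

lemma z2_cofactors_pos:
  assumes tv: "sph_tetra_vertices p" and E: "edge_matrix p = z2_matrix 1 a b c 1 d"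
  shows "z2_det a b c d > 0" and "z2_cof00 a b c d > 0" and "z2_cof22 a b c d > 0"
proof -
  show pos: "z2_det a b c d > 0"
    using det_edge_matrix_pos [OF tv] by (simp add: E det_z2_edge_matrix)
  have "z2_adjugate a b c d ** edge_matrix p = z2_det a b c d *\<^sub>R mat 1"
    unfolding E by (rule z2_adjugate_mult)
  from outer_normals_from_inverse(1) [OF tv this pos, of 0]
    outer_normals_from_inverse(1) [OF tv this pos, of 2]
  show "z2_cof00 a b c d > 0" "z2_cof22 a b c d > 0"
    by (simp_all add: z2_adjugate_def z2_matrix_def)
qed

lemma z2_dual_parameter:
  assumes tv: "sph_tetra_vertices p" and E: "edge_matrix p = z2_matrix 1 a b c 1 d"
  shows "cofactor4 (gram_matrix p) 0 0 * cofactor4 (gram_matrix p) 2 2 / det (gram_matrix p)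
    = z2_det a b c d / (z2_cof00 a b c d * z2_cof22 a b c d)"
proof -
  define K where "K = z2_adjugate a b c d"
  define y where "y i = 1 / sqrt (K$i$i)" for i
  define \<Delta> P Q where "\<Delta> = z2_det a b c d" and "P = z2_cof00 a b c d" and "Q = z2_cof22 a b c d"
  have pos: "\<Delta> > 0" "P > 0" "Q > 0"
    using z2_cofactors_pos [OF assms] by (simp_all add: \<Delta>_def P_def Q_def)
  have "K ** edge_matrix p = \<Delta> *\<^sub>R mat 1"
    unfolding E K_def \<Delta>_def by (rule z2_adjugate_mult)
  then have G: "gram_matrix p = (\<chi> i j. y i * K$i$j * y j)"
    unfolding y_def using gram_matrix_from_inverse [OF tv _ pos(1)] transpose_z2_matrix
    by (simp add: K_def z2_adjugate_def)
  have y: "y 0 = 1 / sqrt P" "y 1 = 1 / sqrt P" "y 2 = 1 / sqrt Q" "y 3 = 1 / sqrt Q"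
    by (simp_all add: y_def K_def P_def Q_def z2_adjugate_def z2_matrix_def)
  have sq: "sqrt P * sqrt P = P" "sqrt Q * sqrt Q = Q" using pos by simp_all
  have "prod y UNIV = 1 / (P * Q)"
    unfolding UNIV_4_eq using sq by (simp add: y)
  then have det: "det (gram_matrix p) = \<Delta> ^ 3 / (P * Q)^2"
    unfolding G det_scale_rows_cols K_def det_z2_adjugate \<Delta>_def by (simp add: power2_eq_square)
  have "(\<Prod>k\<in>UNIV. y (of_nat (skip_idx 0 k))) = 1 / (sqrt P * Q)"
    and "(\<Prod>k\<in>UNIV. y (of_nat (skip_idx 2 k))) = 1 / (P * sqrt Q)"
    unfolding UNIV_3_eq using sq by (simp_all add: skip_idx_def y mult.assoc)
  then have cof: "cofactor4 (gram_matrix p) 0 0 = \<Delta>^2 / (P * Q^2)"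
    "cofactor4 (gram_matrix p) 2 2 = \<Delta>^2 / (P^2 * Q)"
    unfolding G cofactor4_scale_rows_cols K_def cofactor4_z2_adjugate \<Delta>_def
    using sq by (simp_all add: power2_eq_square)
  show ?thesis
    unfolding \<Delta>_def [symmetric] P_def [symmetric] Q_def [symmetric] det cof(1) cof(2)
    using pos by (simp add: power2_eq_square power3_eq_cube field_simps)
qed

lemma z2_dihedral_angles:
  assumes tv: "sph_tetra_vertices p" and E: "edge_matrix p = z2_matrix 1 a b c 1 d"
  shows "dihedral p 2 3 = arccos (- (z2_cof23 a b c d / z2_cof22 a b c d))"
    and "dihedral p 0 1 = arccos (- (z2_cof01 a b c d / z2_cof00 a b c d))"
    and "dihedral p 1 3
      = arccos (- (z2_cof02 a b c d / (sqrt (z2_cof00 a b c d) * sqrt (z2_cof22 a b c d))))"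
    and "dihedral p 1 2
      = arccos (- (z2_cof03 a b c d / (sqrt (z2_cof00 a b c d) * sqrt (z2_cof22 a b c d))))"
proof -
  note pos = z2_cofactors_pos [OF assms]
  have "z2_adjugate a b c d ** edge_matrix p = z2_det a b c d *\<^sub>R mat 1"
    unfolding E by (rule z2_adjugate_mult)
  from dihedral_from_inverse [OF tv this pos(1)] pos
  show "dihedral p 2 3 = arccos (- (z2_cof23 a b c d / z2_cof22 a b c d))"
    "dihedral p 0 1 = arccos (- (z2_cof01 a b c d / z2_cof00 a b c d))"
    "dihedral p 1 3
      = arccos (- (z2_cof02 a b c d / (sqrt (z2_cof00 a b c d) * sqrt (z2_cof22 a b c d))))"
    "dihedral p 1 2
      = arccos (- (z2_cof03 a b c d / (sqrt (z2_cof00 a b c d) * sqrt (z2_cof22 a b c d))))"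
    by (simp_all add: z2_adjugate_def z2_matrix_def doubleton_eq_iff)
qed

theorem proposition1:
  fixes p :: "4 \<Rightarrow> real^4"
  assumes "sph_tetra_vertices p" and "z2_symmetric p"
  defines "lA \<equiv> edge_len p 0 1" and "lB \<equiv> edge_len p 0 2" and "lC \<equiv> edge_len p 0 3"
      and "lD \<equiv> edge_len p 2 3"
      and "A \<equiv> dihedral p 2 3" and "B \<equiv> dihedral p 1 3" and "C \<equiv> dihedral p 1 2"
      and "D \<equiv> dihedral p 0 1"
      and "u \<equiv> sqrt (cofactor4 (edge_matrix p) 0 0 * cofactor4 (edge_matrix p) 2 2
                      / det (edge_matrix p))"
      and "v \<equiv> sqrt (cofactor4 (gram_matrix p) 0 0 * cofactor4 (gram_matrix p) 2 2
                      / det (gram_matrix p))"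
  shows "u = sin ((lA + lD) / 2) / sin ((A + D) / 2)
       \<and> (A \<noteq> D \<longrightarrow> u = sin ((lA - lD) / 2) / sin ((D - A) / 2))
       \<and> u = sin lB / sin B
       \<and> u = sin lC / sin C
       \<and> u = inverse v"
proof -
  define a b c d where "a = p 0 \<bullet> p 1" and "b = p 0 \<bullet> p 2" and "c = p 0 \<bullet> p 3" and "d = p 2 \<bullet> p 3"
  have E: "edge_matrix p = z2_matrix 1 a b c 1 d"
    unfolding a_def b_def c_def d_def by (rule z2_symmetric_edge_matrix [OF assms(1,2)])
  note pos = z2_cofactors_pos [OF assms(1) E]
  have unit: "a^2 < 1" "b^2 < 1" "c^2 < 1" "d^2 < 1"
    unfolding a_def b_def c_def d_def by (simp_all add: inner_vertices_sq_less_1 [OF assms(1)])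
  have u: "u = sqrt (z2_cof00 a b c d * z2_cof22 a b c d / z2_det a b c d)"
    unfolding u_def E det_z2_edge_matrix cofactor4_z2_edge_matrix ..
  have "v = sqrt (z2_det a b c d / (z2_cof00 a b c d * z2_cof22 a b c d))"
    unfolding v_def z2_dual_parameter [OF assms(1) E] ..
  then have "u = inverse v" unfolding u by (simp add: real_sqrt_inverse [symmetric])
  moreover have "lA = arccos a" "lB = arccos b" "lC = arccos c" "lD = arccos d"
    by (simp_all add: lA_def lB_def lC_def lD_def edge_len_def a_def b_def c_def d_def)
  moreover note z2_dihedral_angles [OF assms(1) E]
  ultimately show ?thesis
    using half_angle_identities [OF pos unit(1,4) z2_cofactor_identities(1,2,5,6)]
      sine_ratio_from_cofactors [OF pos(2,3,1) z2_cofactor_identities(3) unit(2)]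
      sine_ratio_from_cofactors [OF pos(2,3,1) z2_cofactor_identities(4) unit(3)]
    unfolding u A_def B_def C_def D_def by simp
qed

end
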